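(* Let $l\ge2$ and $r\ge3$ be integers, $\kappa\in\bigl(1-\frac{2(r-1)}{lr},1-\frac1l\bigr)$, $\lambda>0$, and set $c=r-\frac{2+r}{3-l(1-\kappa)}$ (so $c>0$). There exists $h_0>0$ such that for every $n$, every $\Gamma\in\mathcal B(l,r,n)$ which is a $(\lambda,\kappa)$ expander, every $0<h<h_0$, every choice of signs $h_i\in\{-h,+h\}$, every high-noise-solution $(\underline\eta,\underline{\widehat\eta})$ of the BP equations on $\Gamma$, and every polymer $\gamma\subset\Gamma$ with $|\gamma|<\lambda n$, $$|K(\gamma)|\le h^{\frac c2|\gamma|}.$$
   Context: $n\ge1$ is an integer with $m=nl/r$ an integer. $V$ is a set of $n$ variable nodes and $C$ a set of $m$ check nodes. $\mathcal B(l,r,n)$ is the set of simple bipartite graphs $\Gamma$ (no multiple edges) with vertex classes $V,C$ and edge set $E$, in which every variable node has degree $l$ and every check node has degree $r$. Letters $i,j$ denote variable nodes and $a,b$ check nodes; $\partial i$ and $\partial a$ denote neighbourhoods in $\Gamma$. Expander: for $\lambda,\kappa>0$, $\Gamma$ is a $(\lambda,\kappa)$ expander if every $\mathcal V\subset V$ with $|\mathcal V|<\lambda n$ satisfies $|\partial\mathcal V|\ge\kappa l|\mathcal V|$, where $\partial\mathcal V$ is the set of check nodes adjacent to at least one node of $\mathcal V$. Channel variables: $h>0$ is a parameter, and $h_i\in\{-h,+h\}$ for each $i\in V$. BP equations: real messages $\eta_{i\to a},\widehat\eta_{a\to i}$, one of each for every edge $(i,a)\in E$, satisfying $\eta_{i\to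 a}=h_i+\sum_{b\in\partial i\setminus a}\widehat\eta_{b\to i}$ and $\widehat\eta_{a\to i}=\tanh^{-1}\bigl(\prod_{j\in\partial a\setminus i}\tanh\eta_{j\to a}\bigr)$. A high-noise-solution is a solution such that, for a constant $A_0$ depending only on $l,r$, $|\eta_{i\to a}|\le h+(l-1)h^{r-1}+A_0h^r$ and $|\widehat\eta_{a\to i}|\le h^{r-1}+A_0h^r$ for every edge. Generalized loops and polymers: a generalized loop $g$ is a subgraph of $\Gamma$ (a set of edges of $\Gamma$ together with their endpoints) in which every vertex has induced degree at least $2$; the empty subgraph is allowed. $d_i(g)$, $d_a(g)$ denote induced degrees in $g$. A polymer $\gamma$ is a nonempty connected generalized loop; $|\gamma|$ is its number of vertices. Activities: with $m_i=\tanh\bigl(h_i+\sum_{a\in\partial i}\widehat\eta_{a\to i}\bigr)$, $K(\emptyset)=1$ and $K(g)=\prod_{i\in g\cap V}K_i\prod_{a\in g\cap C}K_a$, where $$K_i=\frac{(1-m_i)^{d_i(g)-1}+(-1)^{d_i(g)}(1+m_i)^{d_i(g)-1}}{2(1-m_i^2)^{d_i(g)-1}},$$ $$K_a=\prod_{i\in\partial a\cap g}\sqrt{\frac{1-\tanh^2\eta_{i\to a}}{1-\prod_{j\in\partial a\setminus i}\tanh^2\eta_{j\to a}}}\;\prod_{i\in\partial a\cap g^c}\tanh\eta_{i\to a}\;\cdot\;\frac{1+(-1)^{d_a(g)}\prod_{i\in\partial a}\tanh^{d_a(g)-1}\eta_{i\to a}}{1+\prod_{i\in\partial a}\tanh\eta_{i\to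 a}}\;\prod_{i\in\partial a\cap g}\sqrt{1-m_i^2},$$ where $\partial a\cap g$ is the set of $i\in\partial a$ with $(i,a)$ an edge of $g$, and $\partial a\cap g^c=\partial a\setminus(\partial a\cap g)$. *)

theory Defs
  imports Complex_Main
begin

text \<open>Variable nodes are the naturals i < n, check nodes the naturals a < m.
  A bipartite graph is a set E of pairs (i,a) (variable node i, check node a);
  being a set of pairs, it has no multiple edges.  A generalized loop is
  represented by its edge set G \<subseteq> E; its vertices are the endpoints.\<close>

definition vnbrs :: "(nat \<times> nat) set \<Rightarrow> nat \<Rightarrow> nat set" where
  "vnbrs E i = {a. (i, a) \<in> E}"

definition cnbrs :: "(nat \<times> nat) set \<Rightarrow> nat \<Rightarrow> nat set" where
  "cnbrs E a = {i. (i, a) \<in> E}"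

definition in_B :: "nat \<Rightarrow> nat \<Rightarrow> nat \<Rightarrow> nat \<Rightarrow> (nat \<times> nat) set \<Rightarrow> bool" where
  "in_B l r n m E \<longleftrightarrow> E \<subseteq> {..<n} \<times> {..<m}
     \<and> (\<forall>i<n. card (vnbrs E i) = l) \<and> (\<forall>a<m. card (cnbrs E a) = r)"

definition check_boundary :: "(nat \<times> nat) set \<Rightarrow> nat set \<Rightarrow> nat set" where
  "check_boundary E S = {a. \<exists>i\<in>S. (i, a) \<in> E}"

definition expander :: "nat \<Rightarrow> nat \<Rightarrow> (nat \<times> nat) set \<Rightarrow> real \<Rightarrow> real \<Rightarrow> bool" where
  "expander l n E lam kap \<longleftrightarrow> (\<forall>S. S \<subseteq> {..<n} \<longrightarrow> real (card S) < lam * real n \<longrightarrow>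
      real (card (check_boundary E S)) \<ge> kap * real l * real (card S))"

text \<open>eta i a = message variable i -> check a; etahat a i = message check a -> variable i.\<close>
definition BP_solution :: "(nat \<times> nat) set \<Rightarrow> (nat \<Rightarrow> real) \<Rightarrow> (nat \<Rightarrow> nat \<Rightarrow> real)
    \<Rightarrow> (nat \<Rightarrow> nat \<Rightarrow> real) \<Rightarrow> bool" where
  "BP_solution E hs eta etahat \<longleftrightarrow> (\<forall>(i, a)\<in>E.
      eta i a = hs i + (\<Sum>b\<in>vnbrs E i - {a}. etahat b i) \<and>
      etahat a i = artanh (\<Prod>j\<in>cnbrs E a - {i}. tanh (eta j a)))"

definition high_noise :: "nat \<Rightarrow> nat \<Rightarrow> real \<Rightarrow> real \<Rightarrow> (nat \<times> nat) set
    \<Rightarrow> (nat \<Rightarrow> nat \<Rightarrow> real) \<Rightarrow> (nat \<Rightarrow> nat \<Rightarrow> real) \<Rightarrow> bool" where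
  "high_noise l r A0 h E eta etahat \<longleftrightarrow> (\<forall>(i, a)\<in>E.
      \<bar>eta i a\<bar> \<le> h + (real l - 1) * h ^ (r - 1) + A0 * h ^ r \<and>
      \<bar>etahat a i\<bar> \<le> h ^ (r - 1) + A0 * h ^ r)"

definition gen_loop :: "(nat \<times> nat) set \<Rightarrow> (nat \<times> nat) set \<Rightarrow> bool" where
  "gen_loop E G \<longleftrightarrow> G \<subseteq> E \<and>
     (\<forall>(i, a)\<in>G. 2 \<le> card (vnbrs G i) \<and> 2 \<le> card (cnbrs G a))"

text \<open>Vertices: Inl i for variable nodes, Inr a for check nodes.\<close>
definition adj :: "(nat \<times> nat) set \<Rightarrow> ((nat + nat) \<times> (nat + nat)) set" where
  "adj G = {(Inl i, Inr a) | i a. (i, a) \<in> G} \<union> {(Inr a, Inl i) | i a. (i, a) \<in> G}"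

definition gverts :: "(nat \<times> nat) set \<Rightarrow> (nat + nat) set" where
  "gverts G = Inl ` fst ` G \<union> Inr ` snd ` G"

definition connected_sub :: "(nat \<times> nat) set \<Rightarrow> bool" where
  "connected_sub G \<longleftrightarrow> (\<forall>x\<in>gverts G. \<forall>y\<in>gverts G. (x, y) \<in> (adj G)\<^sup>*)"

definition polymer :: "(nat \<times> nat) set \<Rightarrow> (nat \<times> nat) set \<Rightarrow> bool" where
  "polymer E G \<longleftrightarrow> gen_loop E G \<and> G \<noteq> {} \<and> connected_sub G"

text \<open>|gamma| = number of vertices.\<close>
definition gsize :: "(nat \<times> nat) set \<Rightarrow> nat" where
  "gsize G = card (fst ` G) + card (snd ` G)"

definition magn :: "(nat \<times> nat) set \<Rightarrow> (nat \<Rightarrow> real) \<Rightarrow> (nat \<Rightarrow> nat \<Rightarrow> real) \<Rightarrow> nat \<Rightarrow> real" where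
  "magn E hs etahat i = tanh (hs i + (\<Sum>a\<in>vnbrs E i. etahat a i))"

definition K_var :: "real \<Rightarrow> nat \<Rightarrow> real" where
  "K_var mi d = ((1 - mi) ^ (d - 1) + (-1) ^ d * (1 + mi) ^ (d - 1)) / (2 * (1 - mi\<^sup>2) ^ (d - 1))"

definition K_chk :: "(nat \<times> nat) set \<Rightarrow> (nat \<times> nat) set \<Rightarrow> (nat \<Rightarrow> real)
    \<Rightarrow> (nat \<Rightarrow> nat \<Rightarrow> real) \<Rightarrow> (nat \<Rightarrow> nat \<Rightarrow> real) \<Rightarrow> nat \<Rightarrow> real" where
  "K_chk E G hs eta etahat a =
     (let d = card (cnbrs G a) in
      (\<Prod>i\<in>cnbrs G a. sqrt ((1 - (tanh (eta i a))\<^sup>2) /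
           (1 - (\<Prod>j\<in>cnbrs E a - {i}. (tanh (eta j a))\<^sup>2)))) *
      (\<Prod>i\<in>cnbrs E a - cnbrs G a. tanh (eta i a)) *
      ((1 + (-1) ^ d * (\<Prod>i\<in>cnbrs E a. tanh (eta i a) ^ (d - 1))) /
        (1 + (\<Prod>i\<in>cnbrs E a. tanh (eta i a)))) *
      (\<Prod>i\<in>cnbrs G a. sqrt (1 - (magn E hs etahat i)\<^sup>2)))"

definition activity :: "(nat \<times> nat) set \<Rightarrow> (nat \<times> nat) set \<Rightarrow> (nat \<Rightarrow> real)
    \<Rightarrow> (nat \<Rightarrow> nat \<Rightarrow> real) \<Rightarrow> (nat \<Rightarrow> nat \<Rightarrow> real) \<Rightarrow> real" where
  "activity E G hs eta etahat =
     (if G = {} then 1 else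
      (\<Prod>i\<in>fst ` G. K_var (magn E hs etahat i) (card (vnbrs G i))) *
      (\<Prod>a\<in>snd ` G. K_chk E G hs eta etahat a))"

end

theory Submission
  imports Defs
begin

text \<open>
  The activity of a polymer \<gamma> with variable nodes S (v of them), check nodes C
  (k of them) and e edges is a product of one factor per vertex.  When h is small,
  every message and every magnetisation is O(h), so each variable factor is
  bounded by a constant, while the factor of a check node a of induced degree
  d_a carries r - d_a small factors tanh \<eta>.  Hence
      |K(\<gamma>)| \<le> B^(v+k) * h^N   with   N = \<Sum>_a (r - d_a) = r k - e.
  On the combinatorial side every variable node of \<gamma> has induced degree \<ge> 2,
  so 2v \<le> e, and the expander property applied to S gives
  e \<le> k + l(1-\<kappa>) v.  An elementary inequality then yields N \<ge> c (v + k),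
  and for h below a threshold h0 the constant B^(v+k) is absorbed by half of the
  exponent, leaving |K(\<gamma>)| \<le> h^(c/2 |\<gamma>|).

  Only the a priori bounds of a high-noise solution enter, not the BP equations
  themselves.
\<close>

text \<open>tanh is 2-Lipschitz at 0 (in fact 1-Lipschitz; the factor 2 makes the proof one line
  from exp(x) \<ge> 1 + x).\<close>
lemma abs_tanh_le_twice_abs:
  fixes x :: real
  shows "\<bar>tanh x\<bar> \<le> 2 * \<bar>x\<bar>"
proof -
  define y where "y = \<bar>x\<bar>"
  have y0: "0 \<le> y" unfolding y_def by simp
  have e: "1 - 2 * y \<le> exp (-2 * y)" using exp_ge_add_one_self[of "-2 * y"] by simp
  have p: "0 < 1 + exp (-2 * y)" by (simp add: add_pos_pos)
  have "tanh y = (1 - exp (-2 * y)) / (1 + exp (-2 * y))" by (rule tanh_real_altdef)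
  also have "\<dots> \<le> (1 - exp (-2 * y)) / 1"
    using y0 e p by (intro divide_left_mono) auto
  also have "\<dots> \<le> 2 * y" using e by simp
  finally show ?thesis unfolding y_def by (simp add: tanh_real_abs)
qed

lemma abs_prod_le_power:
  fixes f :: "'a \<Rightarrow> real"
  assumes "\<And>x. x \<in> A \<Longrightarrow> \<bar>f x\<bar> \<le> b"
  shows "\<bar>prod f A\<bar> \<le> b ^ card A"
proof (cases "finite A")
  case True
  have "\<bar>prod f A\<bar> = (\<Prod>x\<in>A. \<bar>f x\<bar>)" by (simp add: abs_prod)
  also have "\<dots> \<le> (\<Prod>x\<in>A. b)" using assms by (intro prod_mono) auto
  finally show ?thesis by simp
qed simp

lemma abs_prod_le_bound:
  fixes f :: "'a \<Rightarrow> real"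
  assumes "finite A" "A \<noteq> {}" "b \<le> 1" "\<And>x. x \<in> A \<Longrightarrow> \<bar>f x\<bar> \<le> b"
  shows "\<bar>prod f A\<bar> \<le> b"
proof -
  obtain x where "x \<in> A" using assms(2) by blast
  then have b0: "0 \<le> b" using assms(4) by force
  have "\<bar>prod f A\<bar> \<le> b ^ card A" using assms(4) by (rule abs_prod_le_power)
  also have "\<dots> \<le> b ^ 1"
    using assms b0 by (intro power_decreasing) (auto simp: Suc_le_eq card_gt_0_iff)
  finally show ?thesis by simp
qed

section \<open>Bounds on the vertex factors of the activity\<close>

lemma K_var_bound:
  fixes mi :: real
  assumes "\<bar>mi\<bar> \<le> 1/2"
  shows "\<bar>K_var mi d\<bar> \<le> 2 ^ (d - 1)"
proof -
  define k where "k = d - 1"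
  have a1: "0 \<le> 1 - mi" "1 - mi \<le> 3/2" "0 \<le> 1 + mi" "1 + mi \<le> 3/2" using assms by auto
  have num: "\<bar>(1 - mi) ^ k + (-1) ^ d * (1 + mi) ^ k\<bar> \<le> 2 * (3/2) ^ k"
  proof -
    have "\<bar>(1 - mi) ^ k + (-1) ^ d * (1 + mi) ^ k\<bar> \<le> (1 - mi) ^ k + (1 + mi) ^ k"
      using abs_triangle_ineq[of "(1 - mi) ^ k" "(-1) ^ d * (1 + mi) ^ k"] a1
      by (simp add: abs_mult power_abs)
    also have "\<dots> \<le> (3/2) ^ k + (3/2) ^ k" using a1 by (intro add_mono power_mono) auto
    finally show ?thesis by simp
  qed
  have sq: "3/4 \<le> 1 - mi\<^sup>2"
  proof -
    have "mi\<^sup>2 = \<bar>mi\<bar>\<^sup>2" by simp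
    also have "\<dots> \<le> (1/2)\<^sup>2" using assms by (intro power_mono) auto
    finally show ?thesis by (simp add: power2_eq_square)
  qed
  have den: "2 * (3/4) ^ k \<le> 2 * (1 - mi\<^sup>2) ^ k" using sq by (intro mult_left_mono power_mono) auto
  have "\<bar>K_var mi d\<bar> = \<bar>(1 - mi) ^ k + (-1) ^ d * (1 + mi) ^ k\<bar> / (2 * (1 - mi\<^sup>2) ^ k)"
    using sq unfolding K_var_def k_def by (simp add: abs_divide)
  also have "\<dots> \<le> (2 * (3/2) ^ k) / (2 * (3/4) ^ k)"
    by (rule frac_le) (use num den in auto)
  also have "\<dots> = 2 ^ k"
    using power_mult_distrib[of "2::real" "3/4" k] by simp
  finally show ?thesis unfolding k_def .
qed

lemma sqrt_cavity_ratio_le_2: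
  fixes t P :: real
  assumes "\<bar>t\<bar> \<le> 1" "0 \<le> P" "P \<le> 1/4"
  shows "\<bar>sqrt ((1 - t\<^sup>2) / (1 - P))\<bar> \<le> 2"
proof -
  have q: "0 \<le> 1 - t\<^sup>2" "1 - t\<^sup>2 \<le> 1" using assms(1) by (auto simp: abs_square_le_1)
  have nn: "0 \<le> (1 - t\<^sup>2) / (1 - P)" using q assms by (intro divide_nonneg_nonneg) auto
  have "(1 - t\<^sup>2) / (1 - P) \<le> 1 / (3/4)" using q assms by (intro frac_le) auto
  then have "(1 - t\<^sup>2) / (1 - P) \<le> 4" by (rule order_trans) simp
  then have "sqrt ((1 - t\<^sup>2) / (1 - P)) \<le> sqrt 4" by (intro real_sqrt_le_mono) simp
  then show ?thesis using nn by simp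
qed

lemma cavity_product_bound:
  fixes tt :: "'a \<Rightarrow> real"
  assumes fin: "finite T" and T2: "2 \<le> card T" and sub: "D \<subseteq> T"
    and half: "\<And>i. i \<in> T \<Longrightarrow> \<bar>tt i\<bar> \<le> 1/2"
  shows "\<bar>\<Prod>i\<in>D. sqrt ((1 - (tt i)\<^sup>2) / (1 - (\<Prod>j\<in>T - {i}. (tt j)\<^sup>2)))\<bar> \<le> 2 ^ card D"
proof (rule abs_prod_le_power, rule sqrt_cavity_ratio_le_2)
  fix i assume "i \<in> D"
  then have iT: "i \<in> T" using sub by auto
  then show "\<bar>tt i\<bar> \<le> 1" using half by force
  have "T - {i} \<noteq> {}" using iT T2 card_mono[of "{i}" T] by force
  moreover have "\<bar>(tt j)\<^sup>2\<bar> \<le> 1/4" if "j \<in> T - {i}" for j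
  proof -
    have "\<bar>tt j\<bar>\<^sup>2 \<le> (1/2)\<^sup>2" using half that by (intro power_mono) auto
    then show ?thesis by (simp add: power2_eq_square)
  qed
  ultimately have "\<bar>\<Prod>j\<in>T - {i}. (tt j)\<^sup>2\<bar> \<le> 1/4"
    using fin by (intro abs_prod_le_bound) auto
  then show "(\<Prod>j\<in>T - {i}. (tt j)\<^sup>2) \<le> 1/4" by simp
  show "0 \<le> (\<Prod>j\<in>T - {i}. (tt j)\<^sup>2)" by (intro prod_nonneg) auto
qed

lemma check_parity_factor_bound:
  fixes t :: "'a \<Rightarrow> real"
  assumes "finite T" "T \<noteq> {}" "\<And>i. i \<in> T \<Longrightarrow> \<bar>t i\<bar> \<le> 1/2"
  shows "\<bar>(1 + (-1) ^ d * (\<Prod>i\<in>T. t i ^ (d - 1))) / (1 + (\<Prod>i\<in>T. t i))\<bar> \<le> 4"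
proof -
  have "\<bar>t i ^ (d - 1)\<bar> \<le> 1" if "i \<in> T" for i
  proof -
    have "\<bar>t i\<bar> \<le> 1" using assms(3) that by force
    then show ?thesis by (simp add: power_abs power_le_one)
  qed
  then have "\<bar>\<Prod>i\<in>T. t i ^ (d - 1)\<bar> \<le> 1"
    using assms by (intro abs_prod_le_bound) auto
  moreover have "\<bar>(-1::real) ^ d\<bar> = 1" by (simp add: power_abs)
  ultimately have "\<bar>(-1) ^ d * (\<Prod>i\<in>T. t i ^ (d - 1))\<bar> \<le> 1" by (simp add: abs_mult)
  then have num: "\<bar>1 + (-1) ^ d * (\<Prod>i\<in>T. t i ^ (d - 1))\<bar> \<le> 2" by linarith
  have "\<bar>\<Prod>i\<in>T. t i\<bar> \<le> 1/2" using assms by (intro abs_prod_le_bound) auto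
  then have den: "1/2 \<le> 1 + (\<Prod>i\<in>T. t i)" by linarith
  have "\<bar>(1 + (-1) ^ d * (\<Prod>i\<in>T. t i ^ (d - 1))) / (1 + (\<Prod>i\<in>T. t i))\<bar>
      \<le> 2 / (1/2)"
    unfolding abs_divide using num den by (intro frac_le) auto
  then show ?thesis by simp
qed

lemma K_chk_bound:
  fixes t :: real
  assumes fin: "finite (cnbrs E a)" and deg: "card (cnbrs E a) = r" and r2: "2 \<le> r"
    and sub: "cnbrs G a \<subseteq> cnbrs E a"
    and small: "\<And>i. i \<in> cnbrs E a \<Longrightarrow> \<bar>tanh (eta i a)\<bar> \<le> t" and "0 \<le> t" "t \<le> 1/2"
  shows "\<bar>K_chk E G hs eta etahat a\<bar> \<le> 2 ^ (r + 2) * t ^ (r - card (cnbrs G a))"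
proof -
  define T where "T = cnbrs E a"
  define D where "D = cnbrs G a"
  define tt where "tt = (\<lambda>i. tanh (eta i a))"
  define d where "d = card D"
  have finD: "finite D" using fin sub finite_subset unfolding D_def by blast
  have half: "\<And>i. i \<in> T \<Longrightarrow> \<bar>tt i\<bar> \<le> 1/2" using small assms(7) unfolding T_def tt_def by force
  have dr: "d \<le> r" using card_mono[OF fin sub] deg unfolding d_def D_def by simp
  define P1 where "P1 = (\<Prod>i\<in>D. sqrt ((1 - (tt i)\<^sup>2) / (1 - (\<Prod>j\<in>T - {i}. (tt j)\<^sup>2))))"
  define P2 where "P2 = (\<Prod>i\<in>T - D. tt i)"
  define P3 where "P3 = (1 + (-1) ^ d * (\<Prod>i\<in>T. tt i ^ (d - 1))) / (1 + (\<Prod>i\<in>T. tt i))"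
  define P4 where "P4 = (\<Prod>i\<in>D. sqrt (1 - (magn E hs etahat i)\<^sup>2))"
  have K: "K_chk E G hs eta etahat a = P1 * P2 * P3 * P4"
    unfolding K_chk_def Let_def P1_def P2_def P3_def P4_def T_def D_def tt_def d_def by simp
  have "\<bar>P1\<bar> \<le> 2 ^ d"
    unfolding P1_def d_def using fin deg r2 sub half unfolding T_def D_def
    by (intro cavity_product_bound) auto
  also have "\<dots> \<le> 2 ^ r" using dr by (intro power_increasing) auto
  finally have b1: "\<bar>P1\<bar> \<le> 2 ^ r" .
  have b2: "\<bar>P2\<bar> \<le> t ^ (r - d)"
  proof -
    have "\<bar>P2\<bar> \<le> t ^ card (T - D)" unfolding P2_def
      by (rule abs_prod_le_power) (use small in \<open>auto simp: T_def tt_def\<close>)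
    also have "card (T - D) = r - d"
      using card_Diff_subset[OF finD sub[folded D_def T_def]] deg unfolding d_def T_def by simp
    finally show ?thesis .
  qed
  have b3: "\<bar>P3\<bar> \<le> 4"
    unfolding P3_def using fin deg r2 half unfolding T_def
    by (intro check_parity_factor_bound) auto
  have b4: "\<bar>P4\<bar> \<le> 1"
  proof -
    have "\<bar>P4\<bar> \<le> 1 ^ card D" unfolding P4_def
    proof (rule abs_prod_le_power)
      fix i
      have "\<bar>magn E hs etahat i\<bar> \<le> 1" unfolding magn_def
        using tanh_real_bounds[of "hs i + (\<Sum>a\<in>vnbrs E i. etahat a i)"] by auto
      then show "\<bar>sqrt (1 - (magn E hs etahat i)\<^sup>2)\<bar> \<le> 1" by (auto simp: abs_square_le_1)
    qed
    then show ?thesis by simp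
  qed
  have "\<bar>K_chk E G hs eta etahat a\<bar> = \<bar>P1\<bar> * \<bar>P2\<bar> * \<bar>P3\<bar> * \<bar>P4\<bar>" by (simp add: K abs_mult)
  also have "\<dots> \<le> 2 ^ r * t ^ (r - d) * 4 * 1"
    using b1 b2 b3 b4 assms(6) by (intro mult_mono) auto
  finally show ?thesis unfolding d_def D_def by simp
qed

section \<open>Messages in the high-noise regime\<close>

lemma scaled_power_le_square:
  fixes a h :: real
  assumes "0 \<le> h" "h \<le> 1" "2 \<le> j"
  shows "a * h ^ j \<le> \<bar>a\<bar> * h\<^sup>2"
proof -
  have "a * h ^ j \<le> \<bar>a\<bar> * h ^ j" using assms by (intro mult_right_mono) auto
  also have "\<dots> \<le> \<bar>a\<bar> * h\<^sup>2" using assms by (intro mult_left_mono power_decreasing) auto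
  finally show ?thesis .
qed

lemma high_noise_tanh_message_bound:
  fixes h A0 :: real
  assumes hn: "high_noise l r A0 h E eta etahat" and ia: "(i, a) \<in> E"
    and l1: "1 \<le> l" and r3: "3 \<le> r" and h: "0 < h" "h \<le> 1"
    and small: "h * (real l + \<bar>A0\<bar>) \<le> 1"
  shows "\<bar>tanh (eta i a)\<bar> \<le> 4 * h"
proof -
  have "\<bar>eta i a\<bar> \<le> h + (real l - 1) * h ^ (r - 1) + A0 * h ^ r"
    using hn ia unfolding high_noise_def by auto
  also have "\<dots> \<le> h + \<bar>real l - 1\<bar> * h\<^sup>2 + \<bar>A0\<bar> * h\<^sup>2"
    using h r3 by (intro add_mono order_refl scaled_power_le_square) auto
  also have "\<dots> = h + (real l - 1) * h\<^sup>2 + \<bar>A0\<bar> * h\<^sup>2" using l1 by simp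
  also have "\<dots> \<le> h + (real l + \<bar>A0\<bar>) * h\<^sup>2" by (simp add: algebra_simps)
  also have "(real l + \<bar>A0\<bar>) * h\<^sup>2 = h * (h * (real l + \<bar>A0\<bar>))"
    by (simp add: power2_eq_square)
  also have "\<dots> \<le> h" using small h by (intro mult_left_le) auto
  finally have "\<bar>eta i a\<bar> \<le> 2 * h" by simp
  then show ?thesis using abs_tanh_le_twice_abs[of "eta i a"] by linarith
qed

lemma high_noise_magn_bound:
  fixes h A0 :: real
  assumes hn: "high_noise l r A0 h E eta etahat" and deg: "card (vnbrs E i) = l"
    and hi: "\<bar>hs i\<bar> = h" and r3: "3 \<le> r" and h: "0 < h" "h \<le> 1"
    and small: "h * real l * (1 + \<bar>A0\<bar>) \<le> 1"
  shows "\<bar>magn E hs etahat i\<bar> \<le> 4 * h"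
proof -
  have hat: "\<bar>etahat a i\<bar> \<le> (1 + \<bar>A0\<bar>) * h\<^sup>2" if "a \<in> vnbrs E i" for a
  proof -
    have "\<bar>etahat a i\<bar> \<le> 1 * h ^ (r - 1) + A0 * h ^ r"
      using hn that unfolding high_noise_def vnbrs_def by auto
    also have "\<dots> \<le> \<bar>1\<bar> * h\<^sup>2 + \<bar>A0\<bar> * h\<^sup>2"
      using h r3 by (intro add_mono scaled_power_le_square) auto
    finally show ?thesis by (simp add: algebra_simps)
  qed
  have "\<bar>\<Sum>a\<in>vnbrs E i. etahat a i\<bar> \<le> (\<Sum>a\<in>vnbrs E i. (1 + \<bar>A0\<bar>) * h\<^sup>2)"
    using hat by (intro order_trans[OF sum_abs] sum_mono) auto
  also have "\<dots> = real l * (1 + \<bar>A0\<bar>) * h\<^sup>2" using deg by simp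
  also have "\<dots> \<le> h"
    using mult_right_mono[OF small, of h] h by (simp add: power2_eq_square algebra_simps)
  finally have "\<bar>hs i + (\<Sum>a\<in>vnbrs E i. etahat a i)\<bar> \<le> 2 * h" using hi by linarith
  then have "2 * \<bar>hs i + (\<Sum>a\<in>vnbrs E i. etahat a i)\<bar> \<le> 4 * h" by simp
  then show ?thesis unfolding magn_def by (rule order_trans[OF abs_tanh_le_twice_abs])
qed

section \<open>Counting vertices and edges of a polymer\<close>

lemma in_B_finite:
  assumes "in_B l r n m E"
  shows "finite E"
  using assms finite_subset[of E "{..<n} \<times> {..<m}"] unfolding in_B_def by auto

lemma finite_vnbrs:
  assumes "finite E"
  shows "finite (vnbrs E i)"
proof (rule finite_subset)
  show "vnbrs E i \<subseteq> snd ` E" unfolding vnbrs_def by force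
qed (use assms in simp)

lemma finite_cnbrs:
  assumes "finite E"
  shows "finite (cnbrs E a)"
proof (rule finite_subset)
  show "cnbrs E a \<subseteq> fst ` E" unfolding cnbrs_def by force
qed (use assms in simp)

lemma card_eq_sum_var_degrees:
  assumes "finite G"
  shows "card G = (\<Sum>i\<in>fst ` G. card (vnbrs G i))"
proof -
  have "G = Sigma (fst ` G) (vnbrs G)" by (force simp: vnbrs_def)
  then have "card G = card (Sigma (fst ` G) (vnbrs G))" by (rule arg_cong)
  also have "\<dots> = (\<Sum>i\<in>fst ` G. card (vnbrs G i))"
    using assms finite_vnbrs[OF assms] by (intro card_SigmaI) auto
  finally show ?thesis .
qed

lemma card_eq_sum_check_degrees:
  assumes "finite G"
  shows "card G = (\<Sum>a\<in>snd ` G. card (cnbrs G a))"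
proof -
  have "prod.swap ` G = Sigma (snd ` G) (cnbrs G)" by (force simp: cnbrs_def)
  then have "card (prod.swap ` G) = card (Sigma (snd ` G) (cnbrs G))" by (rule arg_cong)
  also have "\<dots> = (\<Sum>a\<in>snd ` G. card (cnbrs G a))"
    using assms finite_cnbrs[OF assms] by (intro card_SigmaI) auto
  finally show ?thesis using card_image[OF inj_swap[of G]] by simp
qed

lemma gen_loop_twice_vars_le_edges:
  assumes "gen_loop E G" "finite G"
  shows "2 * card (fst ` G) \<le> card G"
proof -
  have "(\<Sum>i\<in>fst ` G. 2) \<le> (\<Sum>i\<in>fst ` G. card (vnbrs G i))"
    using assms(1) unfolding gen_loop_def by (intro sum_mono) force
  then show ?thesis using card_eq_sum_var_degrees[OF assms(2)] by simp
qed

text \<open>In an l-regular graph, the check boundary of the variable nodes of G \<subseteq> E consists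
  of the check nodes of G and of the l - d_i edges at each variable node i outside G.\<close>
lemma boundary_card_le:
  assumes inB: "in_B l r n m E" and GE: "G \<subseteq> E"
  defines "S \<equiv> fst ` G"
  shows "real (card (check_boundary E S))
           \<le> real (card (snd ` G)) + real l * real (card S) - real (card G)"
proof -
  have finE: "finite E" using inB by (rule in_B_finite)
  have finG: "finite G" using GE finE by (rule finite_subset)
  have vsub: "\<And>i. vnbrs G i \<subseteq> vnbrs E i" using GE unfolding vnbrs_def by auto
  have deg: "\<And>i. i \<in> S \<Longrightarrow> card (vnbrs E i) = l"
    using inB GE unfolding in_B_def S_def by force
  have missing_le: "card (vnbrs G i) \<le> l" if "i \<in> S" for i
    using card_mono[OF finite_vnbrs[OF finE] vsub[of i]] deg[OF that] by simp
  have missing: "card (vnbrs E i - vnbrs G i) = l - card (vnbrs G i)" if "i \<in> S" for i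
    using card_Diff_subset[OF finite_subset[OF vsub finite_vnbrs[OF finE]] vsub] deg[OF that]
    by simp
  define M where "M = (\<Union>i\<in>S. vnbrs E i - vnbrs G i)"
  have finS: "finite S" using finG unfolding S_def by simp
  have finM: "finite M" unfolding M_def using finS finite_vnbrs[OF finE] by blast
  have "check_boundary E S \<subseteq> snd ` G \<union> M"
    unfolding check_boundary_def S_def M_def vnbrs_def by force
  then have "card (check_boundary E S) \<le> card (snd ` G \<union> M)"
    using finG finM by (intro card_mono) auto
  also have "\<dots> \<le> card (snd ` G) + card M" by (rule card_Un_le)
  also have "card M \<le> (\<Sum>i\<in>S. card (vnbrs E i - vnbrs G i))"
    unfolding M_def using finS by (rule card_UN_le)
  also have "\<dots> = (\<Sum>i\<in>S. l - card (vnbrs G i))" using missing by (rule sum.cong[OF refl])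
  finally have "card (check_boundary E S) \<le> card (snd ` G) + (\<Sum>i\<in>S. l - card (vnbrs G i))"
    by simp
  then have "real (card (check_boundary E S))
      \<le> real (card (snd ` G) + (\<Sum>i\<in>S. l - card (vnbrs G i)))" by (rule of_nat_mono)
  also have "\<dots> = real (card (snd ` G)) + (\<Sum>i\<in>S. real l - real (card (vnbrs G i)))"
    using missing_le by (simp add: of_nat_diff)
  also have "\<dots> = real (card (snd ` G)) + real l * real (card S) - real (card G)"
    using card_eq_sum_var_degrees[OF finG] unfolding S_def by (simp add: sum_subtractf)
  finally show ?thesis .
qed

lemma expander_edge_bound:
  assumes inB: "in_B l r n m E" and exp: "expander l n E lam kap"
    and GE: "G \<subseteq> E" and small: "real (gsize G) < lam * real n"
  shows "real (card G) \<le> real (card (snd ` G)) + real l * (1 - kap) * real (card (fst ` G))"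
proof -
  have "fst ` G \<subseteq> {..<n}" using inB GE unfolding in_B_def by force
  moreover have "real (card (fst ` G)) < lam * real n" using small unfolding gsize_def by simp
  ultimately have "kap * real l * real (card (fst ` G)) \<le> real (card (check_boundary E (fst ` G)))"
    using exp unfolding expander_def by blast
  then show ?thesis using boundary_card_le[OF inB GE] by (simp add: algebra_simps)
qed

text \<open>The deficiency N = \<Sum>_a (r - d_a) counts the small factors tanh \<eta> carried by the check
  nodes of G; in an (l,r)-regular graph it equals r k - e.\<close>
definition check_deficiency :: "nat \<Rightarrow> (nat \<times> nat) set \<Rightarrow> nat" where
  "check_deficiency r G = (\<Sum>a\<in>snd ` G. r - card (cnbrs G a))"

lemma check_deficiency_eq:
  assumes inB: "in_B l r n m E" and GE: "G \<subseteq> E"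
  shows "real (check_deficiency r G) = real r * real (card (snd ` G)) - real (card G)"
proof -
  have finE: "finite E" using inB by (rule in_B_finite)
  have "card (cnbrs G a) \<le> r" if "a \<in> snd ` G" for a
  proof -
    have "card (cnbrs G a) \<le> card (cnbrs E a)"
      using GE by (intro card_mono[OF finite_cnbrs[OF finE]]) (auto simp: cnbrs_def)
    also have "card (cnbrs E a) = r" using inB GE that unfolding in_B_def by force
    finally show ?thesis .
  qed
  then have "real (check_deficiency r G) = (\<Sum>a\<in>snd ` G. real r - real (card (cnbrs G a)))"
    unfolding check_deficiency_def by (simp add: of_nat_diff)
  also have "\<dots> = real r * real (card (snd ` G)) - real (card G)"
    using card_eq_sum_check_degrees[OF finite_subset[OF GE finE]] by (simp add: sum_subtractf)
  finally show ?thesis .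
qed

lemma kappa_window:
  fixes l r :: nat and kap :: real
  assumes "1 \<le> l" "1 \<le> r"
    and kap1: "1 - 2 * (real r - 1) / (real l * real r) < kap" and kap2: "kap < 1 - 1 / real l"
  shows "1 < real l * (1 - kap)" and "real l * (1 - kap) < 3"
    and "0 < real r - (2 + real r) / (3 - real l * (1 - kap))"
proof -
  define al where "al = real l * (1 - kap)"
  have lpos: "0 < real l" and rpos: "0 < real r" using assms by auto
  have "1 / real l < 1 - kap" using kap2 by simp
  then have "real l * (1 / real l) < real l * (1 - kap)" using lpos by (rule mult_strict_left_mono)
  then show al1: "1 < real l * (1 - kap)" using lpos by simp
  have "1 - kap < 2 * (real r - 1) / (real l * real r)" using kap1 by simp
  then have "(real l * real r) * (1 - kap) < (real l * real r) * (2 * (real r - 1) / (real l * real r))"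
    using lpos rpos by (intro mult_strict_left_mono) auto
  moreover have "(real l * real r) * (2 * (real r - 1) / (real l * real r)) = 2 * (real r - 1)"
    using lpos rpos by simp
  ultimately have al2: "al * real r < 2 * (real r - 1)" unfolding al_def by (simp add: algebra_simps)
  then have "al * real r < 2 * real r" by simp
  then have "al < 2" using rpos by simp
  then show al3: "real l * (1 - kap) < 3" unfolding al_def by simp
  have "real r - (2 + real r) / (3 - al) = (2 * real r - al * real r - 2) / (3 - al)"
    using al3 unfolding al_def by (simp add: field_simps)
  then show "0 < real r - (2 + real r) / (3 - real l * (1 - kap))"
    using al2 al3 unfolding al_def by simp
qed

lemma exponent_inequality:
  fixes v k e al r :: real
  assumes "e \<le> k + al * v" "2 * v \<le> e" "1 < al" "al < 3" "3 \<le> r" "0 \<le> v" "0 \<le> k"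
  shows "(r - (2 + r) / (3 - al)) * (v + k) \<le> r * k - e"
proof -
  have p: "0 < 3 - al" using assms by simp
  have "(3 - al) * (r * k - e) - (3 - al) * ((r - (2 + r) / (3 - al)) * (v + k))
      = (r - 1 + al) * (e - 2 * v) + (r + 2) * (k + al * v - e)"
    using p by (simp add: field_simps)
  also have "0 \<le> \<dots>" using assms by (intro add_nonneg_nonneg mult_nonneg_nonneg) auto
  finally show ?thesis using p by (simp add: mult_le_cancel_left_pos)
qed

lemma polymer_deficiency_ge:
  fixes l r :: nat and kap lam :: real
  assumes r3: "3 \<le> r" and inB: "in_B l r n m E" and exp: "expander l n E lam kap"
    and pol: "polymer E G" and small: "real (gsize G) < lam * real n"
    and al: "1 < real l * (1 - kap)" "real l * (1 - kap) < 3"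
  shows "(real r - (2 + real r) / (3 - real l * (1 - kap))) * real (gsize G)
           \<le> real (check_deficiency r G)"
proof -
  have GE: "G \<subseteq> E" and loop: "gen_loop E G" using pol unfolding polymer_def gen_loop_def by auto
  have finG: "finite G" using finite_subset[OF GE in_B_finite[OF inB]] .
  have "real (card G) \<le> real (card (snd ` G)) + real l * (1 - kap) * real (card (fst ` G))"
    using expander_edge_bound[OF inB exp GE small] .
  moreover have "2 * real (card (fst ` G)) \<le> real (card G)"
    using gen_loop_twice_vars_le_edges[OF loop finG] by linarith
  ultimately have "(real r - (2 + real r) / (3 - real l * (1 - kap)))
      * (real (card (fst ` G)) + real (card (snd ` G))) \<le> real r * real (card (snd ` G)) - real (card G)"
    using al r3 by (intro exponent_inequality) auto
  then show ?thesis unfolding check_deficiency_eq[OF inB GE] gsize_def by simp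
qed

section \<open>Bounding the activity\<close>

lemma activity_le_power:
  fixes B h :: real
  assumes "G \<noteq> {}" "1 \<le> B" "0 \<le> h"
    and var: "\<And>i. i \<in> fst ` G \<Longrightarrow> \<bar>K_var (magn E hs etahat i) (card (vnbrs G i))\<bar> \<le> B"
    and chk: "\<And>a. a \<in> snd ` G \<Longrightarrow> \<bar>K_chk E G hs eta etahat a\<bar> \<le> B * h ^ (r - card (cnbrs G a))"
  shows "\<bar>activity E G hs eta etahat\<bar> \<le> B ^ gsize G * h ^ check_deficiency r G"
proof -
  have "\<bar>activity E G hs eta etahat\<bar> =
      \<bar>\<Prod>i\<in>fst ` G. K_var (magn E hs etahat i) (card (vnbrs G i))\<bar> *
      \<bar>\<Prod>a\<in>snd ` G. K_chk E G hs eta etahat a\<bar>"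
    unfolding activity_def using assms(1) by (simp add: abs_mult)
  also have "\<dots> \<le> B ^ card (fst ` G) * (\<Prod>a\<in>snd ` G. B * h ^ (r - card (cnbrs G a)))"
  proof (rule mult_mono)
    show "\<bar>\<Prod>i\<in>fst ` G. K_var (magn E hs etahat i) (card (vnbrs G i))\<bar> \<le> B ^ card (fst ` G)"
      by (rule abs_prod_le_power) (rule var)
    show "\<bar>\<Prod>a\<in>snd ` G. K_chk E G hs eta etahat a\<bar> \<le> (\<Prod>a\<in>snd ` G. B * h ^ (r - card (cnbrs G a)))"
      unfolding abs_prod using chk by (intro prod_mono) auto
  qed (use assms in auto)
  also have "\<dots> = B ^ gsize G * h ^ check_deficiency r G"
    unfolding gsize_def check_deficiency_def by (simp add: prod.distrib power_sum power_add)
  finally show ?thesis .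
qed

lemma absorb_constant:
  fixes B h c :: real
  assumes B: "1 \<le> B" and h: "0 < h" "h \<le> 1" and c: "0 < c"
    and hB: "h \<le> (1 / B) powr (2 / c)" and N: "c * real s \<le> real N"
  shows "B ^ s * h ^ N \<le> h powr (c / 2 * real s)"
proof -
  have "h powr (c / 2) \<le> ((1 / B) powr (2 / c)) powr (c / 2)"
    using hB h c by (intro powr_mono2) auto
  also have "\<dots> = 1 / B" using c B by (simp add: powr_powr)
  finally have "B * h powr (c / 2) \<le> 1" using B by (simp add: field_simps)
  moreover have "0 \<le> B * h powr (c / 2)" using B by simp
  ultimately have small: "0 \<le> (B * h powr (c / 2)) ^ s" "(B * h powr (c / 2)) ^ s \<le> 1"
    by (auto intro: power_le_one)
  have "h ^ N = h powr real N" using h by (simp add: powr_realpow)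
  also have "\<dots> \<le> h powr (c * real s)" using N h by (intro powr_mono') auto
  also have "\<dots> = (h powr (c / 2)) ^ s * h powr (c / 2 * real s)"
    using h by (simp add: powr_realpow[symmetric] powr_powr powr_add[symmetric] algebra_simps)
  finally have "B ^ s * h ^ N \<le> (B * h powr (c / 2)) ^ s * h powr (c / 2 * real s)"
    using B by (simp add: power_mult_distrib mult_left_mono mult.assoc)
  also have "\<dots> \<le> h powr (c / 2 * real s)" using small by (intro mult_left_le_one_le) auto
  finally show ?thesis .
qed

lemma polymer_activity_le_power:
  fixes l r :: nat and h A0 :: real
  assumes l2: "2 \<le> l" and r3: "3 \<le> r" and inB: "in_B l r n m E"
    and hs: "\<forall>i<n. hs i \<in> {-h, h}" and hn: "high_noise l r A0 h E eta etahat"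
    and pol: "polymer E G" and h: "0 < h" "h \<le> 1/8"
    and small1: "h * (real l + \<bar>A0\<bar>) \<le> 1" and small2: "h * real l * (1 + \<bar>A0\<bar>) \<le> 1"
  shows "\<bar>activity E G hs eta etahat\<bar>
           \<le> max (2 ^ l) (4 * 8 ^ r) ^ gsize G * h ^ check_deficiency r G"
proof (rule activity_le_power)
  have GE: "G \<subseteq> E" using pol unfolding polymer_def gen_loop_def by auto
  have finE: "finite E" using inB by (rule in_B_finite)
  fix i assume "i \<in> fst ` G"
  then have i: "i < n" "card (vnbrs E i) = l" using inB GE unfolding in_B_def by force+
  have "\<bar>magn E hs etahat i\<bar> \<le> 4 * h"
    using hs i h by (intro high_noise_magn_bound[OF hn _ _ r3 _ _ small2]) auto
  then have "\<bar>K_var (magn E hs etahat i) (card (vnbrs G i))\<bar> \<le> 2 ^ (card (vnbrs G i) - 1)"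
    using h by (intro K_var_bound) auto
  also have "\<dots> \<le> 2 ^ l"
  proof -
    have "card (vnbrs G i) \<le> card (vnbrs E i)"
      using GE by (intro card_mono[OF finite_vnbrs[OF finE]]) (auto simp: vnbrs_def)
    then show ?thesis using i by (intro power_increasing) auto
  qed
  finally show "\<bar>K_var (magn E hs etahat i) (card (vnbrs G i))\<bar> \<le> max (2 ^ l) (4 * 8 ^ r)"
    by simp
next
  have GE: "G \<subseteq> E" using pol unfolding polymer_def gen_loop_def by auto
  have finE: "finite E" using inB by (rule in_B_finite)
  fix a assume "a \<in> snd ` G"
  then have deg: "card (cnbrs E a) = r" using inB GE unfolding in_B_def by force
  define d where "d = card (cnbrs G a)"
  have "\<bar>K_chk E G hs eta etahat a\<bar> \<le> 2 ^ (r + 2) * (4 * h) ^ (r - d)" unfolding d_def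
    using GE h l2 r3
    by (intro K_chk_bound[OF finite_cnbrs[OF finE] deg]
        high_noise_tanh_message_bound[OF hn _ _ r3 _ _ small1]) (auto simp: cnbrs_def)
  also have "\<dots> = 4 * 2 ^ r * 4 ^ (r - d) * h ^ (r - d)" by (simp add: power_mult_distrib power_add)
  also have "\<dots> \<le> 4 * 2 ^ r * 4 ^ r * h ^ (r - d)"
    using h by (intro mult_right_mono mult_left_mono power_increasing) auto
  also have "4 * 2 ^ r * 4 ^ r = (4 * 8 ^ r :: real)" by (simp add: power_mult_distrib[symmetric])
  also have "(4 * 8 ^ r) * h ^ (r - d) \<le> max (2 ^ l) (4 * 8 ^ r) * h ^ (r - d)"
    using h by (intro mult_right_mono) auto
  finally show "\<bar>K_chk E G hs eta etahat a\<bar> \<le> max (2 ^ l) (4 * 8 ^ r) * h ^ (r - card (cnbrs G a))"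
    unfolding d_def .
qed (use pol h in \<open>auto simp: polymer_def le_max_iff_disj\<close>)

theorem mainTheorem8:
  fixes l r :: nat and kap lam A0 :: real
  assumes "l \<ge> 2" and "r \<ge> 3"
    and "1 - 2 * (real r - 1) / (real l * real r) < kap" and "kap < 1 - 1 / real l"
    and "lam > 0"
  shows "\<exists>h0>0. \<forall>n m E h hs eta etahat G.
     n \<ge> 1 \<longrightarrow> n * l = m * r \<longrightarrow> in_B l r n m E \<longrightarrow> expander l n E lam kap \<longrightarrow>
     0 < h \<longrightarrow> h < h0 \<longrightarrow> (\<forall>i<n. hs i \<in> {-h, h}) \<longrightarrow>
     BP_solution E hs eta etahat \<longrightarrow> high_noise l r A0 h E eta etahat \<longrightarrow>
     polymer E G \<longrightarrow> real (gsize G) < lam * real n \<longrightarrow>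
     \<bar>activity E G hs eta etahat\<bar> \<le>
       h powr ((real r - (2 + real r) / (3 - real l * (1 - kap))) / 2 * real (gsize G))"
proof -
  define c where "c = real r - (2 + real r) / (3 - real l * (1 - kap))"
  define B :: real where "B = max (2 ^ l) (4 * 8 ^ r)"
  \<comment> \<open>the first three thresholds make all messages O(h), the last one absorbs B\<close>
  define h0 where "h0 = min (1/8) (min (1 / (real l + \<bar>A0\<bar>))
                          (min (1 / (real l * (1 + \<bar>A0\<bar>))) ((1 / B) powr (2 / c))))"
  have al: "1 < real l * (1 - kap)" "real l * (1 - kap) < 3" and c: "0 < c"
    using kappa_window[of l r kap] assms unfolding c_def by auto
  have B: "1 \<le> B" unfolding B_def by (simp add: le_max_iff_disj)
  have "0 < h0" unfolding h0_def using assms B by (auto intro!: add_pos_nonneg)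
  moreover have "\<bar>activity E G hs eta etahat\<bar> \<le> h powr (c / 2 * real (gsize G))"
    if "in_B l r n m E" "expander l n E lam kap" "0 < h" "h < h0" "\<forall>i<n. hs i \<in> {-h, h}"
      "high_noise l r A0 h E eta etahat" "polymer E G" "real (gsize G) < lam * real n"
    for n m E h hs eta etahat G
  proof -
    have h: "h \<le> 1/8" "h * (real l + \<bar>A0\<bar>) \<le> 1" "h * real l * (1 + \<bar>A0\<bar>) \<le> 1"
      "h \<le> (1 / B) powr (2 / c)"
      using that(3,4) assms(1) unfolding h0_def by (auto simp: field_simps add_pos_nonneg)
    have act: "\<bar>activity E G hs eta etahat\<bar> \<le> B ^ gsize G * h ^ check_deficiency r G"
      unfolding B_def using assms(1,2) that(1,3,5,6,7) h(1-3) by (intro polymer_activity_le_power)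
    have N: "c * real (gsize G) \<le> real (check_deficiency r G)"
      unfolding c_def using polymer_deficiency_ge[OF assms(2) that(1,2,7,8) al] .
    have "B ^ gsize G * h ^ check_deficiency r G \<le> h powr (c / 2 * real (gsize G))"
      using h(1) by (intro absorb_constant[OF B that(3) _ c h(4) N]) simp
    then show ?thesis using act by (rule order_trans[rotated])
  qed
  ultimately show ?thesis unfolding c_def by auto
qed

end
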